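(* Let $\mathcal{S}$ be an $F$-weighted boundary stratum of genus $g$ whose weights contain exactly $n$ distinct weights up to sign, $r_1,\dots,r_n$. Then $r_1\otimes r_1,\dots,r_n\otimes r_n$ are linearly independent over $\mathbb{Q}$ in $\mathrm{Sym}_{\mathbb{Q}}(F)$. Equivalently, $N(\mathcal{S})$ (as a $\mathbb{Q}$-vector space) and the torus $A_\mathcal{S}$ have dimension $g(g+1)/2-n$.
   Context: $F$ is a totally real number field of degree $g$ with trace pairing $\langle x,y\rangle=\mathrm{Tr}_{F/\mathbb{Q}}(xy)$. For a lattice $\mathcal{I}\subset F$ (additive subgroup of rank $g$), $\mathcal{I}^\vee=\{x\in F:\langle x,y\rangle\in\mathbb{Z}\ \forall y\in\mathcal{I}\}$. An $\mathcal{I}$-weighted stable curve is a stable curve of arithmetic genus $g$ and geometric genus $0$ with an element of $\mathcal{I}$ attached to each branch at each node, such that the two branches at a node have opposite weights, the weights on each component sum to zero, and the weights span $\mathcal{I}$; "$F$-weighted" means $\mathcal{I}$-weighted for some lattice $\mathcal{I}$. An $F$-weighted boundary stratum $\mathcal{S}$ is the moduli space of weighted stable curves topologically equivalent (weight-preservingly) to a fixed one; its weights are those of its nodes. $\mathrm{Sym}_{\mathbb{Q}}(F)\subset F\otimes_{\mathbb{Q}}F$ is the subspace of symmetric tensors, $\mathbf{S}_{\mathbb{Q}}(F)$ is the quotient of $F\otimes_{\mathbb{Q}}F$ by the span of $x\otimes y-y\otimes x$, and they are dual via $\langle a\otimes b,c\otimes d\rangle=\langle a,c\rangle\langle b,d\rangle$;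 $\mathbf{S}_{\mathbb{Z}}(\mathcal{I}^\vee)$ is the analogous quotient of $\mathcal{I}^\vee\otimes_{\mathbb{Z}}\mathcal{I}^\vee$. $W(\mathcal{S})\subset\mathrm{Sym}_{\mathbb{Q}}(F)$ is the span of $r\otimes r$ over the weights $r$ of $\mathcal{S}$, $N(\mathcal{S})\subset\mathbf{S}_{\mathbb{Q}}(F)$ its annihilator, and $A_\mathcal{S}=\mathrm{Hom}_{\mathbb{Z}}(N(\mathcal{S})\cap\mathbf{S}_{\mathbb{Z}}(\mathcal{I}^\vee),\mathbb{G}_m)$ the ambient algebraic torus. *)

theory Defs
  imports Complex_Main
begin

definition subfield_C :: "complex set \<Rightarrow> bool" where
  "subfield_C F \<longleftrightarrow> 0 \<in> F \<and> 1 \<in> F \<and>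
     (\<forall>x\<in>F. \<forall>y\<in>F. x + y \<in> F \<and> x * y \<in> F) \<and>
     (\<forall>x\<in>F. - x \<in> F) \<and> (\<forall>x\<in>F. x \<noteq> 0 \<longrightarrow> inverse x \<in> F)"

definition Q_indep :: "(nat \<Rightarrow> complex) \<Rightarrow> nat \<Rightarrow> bool" where
  "Q_indep b g \<longleftrightarrow>
     (\<forall>q :: nat \<Rightarrow> rat. (\<Sum>i<g. of_rat (q i) * b i) = 0 \<longrightarrow> (\<forall>i<g. q i = 0))"

definition Q_span :: "(nat \<Rightarrow> complex) \<Rightarrow> nat \<Rightarrow> complex set" where
  "Q_span b g = {(\<Sum>i<g. of_rat (q i) * b i) | q :: nat \<Rightarrow> rat. True}"

definition Z_span :: "(nat \<Rightarrow> complex) \<Rightarrow> nat \<Rightarrow> complex set" where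
  "Z_span b g = {(\<Sum>i<g. of_int (k i) * b i) | k :: nat \<Rightarrow> int. True}"

definition number_field_of_degree :: "complex set \<Rightarrow> nat \<Rightarrow> bool" where
  "number_field_of_degree F g \<longleftrightarrow> subfield_C F \<and>
     (\<exists>b. (\<forall>i<g. b i \<in> F) \<and> Q_indep b g \<and> Q_span b g = F)"

definition field_emb :: "complex set \<Rightarrow> (complex \<Rightarrow> complex) \<Rightarrow> bool" where
  "field_emb F \<sigma> \<longleftrightarrow> \<sigma> 1 = 1 \<and>
     (\<forall>x\<in>F. \<forall>y\<in>F. \<sigma> (x + y) = \<sigma> x + \<sigma> y \<and> \<sigma> (x * y) = \<sigma> x * \<sigma> y)"

definition totally_real :: "complex set \<Rightarrow> bool" where
  "totally_real F \<longleftrightarrow> (\<forall>\<sigma>. field_emb F \<sigma> \<longrightarrow> (\<forall>x\<in>F. \<sigma> x \<in> \<real>))"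

definition is_lattice :: "complex set \<Rightarrow> nat \<Rightarrow> complex set \<Rightarrow> bool" where
  "is_lattice F g I \<longleftrightarrow> (\<exists>b. (\<forall>i<g. b i \<in> F) \<and> Q_indep b g \<and> I = Z_span b g)"

text \<open>Combinatorial (dual graph) data of the curve: V = irreducible components
  (all rational), H = branches at nodes, \<iota> swaps the two branches of a node,
  vt h = component carrying branch h, w h = weight attached to branch h.
  Stability: every component (P^1, no marked points) has at least 3 special points.
  Arithmetic genus: #nodes - #components + 1 = g, i.e. card H + 2 = 2 g + 2 card V.\<close>
definition weighted_stable_curve ::
  "nat \<Rightarrow> complex set \<Rightarrow> 'v set \<Rightarrow> 'h set \<Rightarrow> ('h \<Rightarrow> 'h) \<Rightarrow> ('h \<Rightarrow> 'v)
     \<Rightarrow> ('h \<Rightarrow> complex) \<Rightarrow> bool" where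
  "weighted_stable_curve g I V H \<iota> vt w \<longleftrightarrow>
     finite V \<and> finite H \<and> V \<noteq> {} \<and>
     (\<forall>h\<in>H. \<iota> h \<in> H \<and> \<iota> h \<noteq> h \<and> \<iota> (\<iota> h) = h) \<and>
     (\<forall>h\<in>H. vt h \<in> V) \<and>
     (\<forall>x\<in>V. card {h\<in>H. vt h = x} \<ge> 3) \<and>
     (\<forall>x\<in>V. \<forall>y\<in>V. (x, y) \<in> {(vt h, vt (\<iota> h)) | h. h \<in> H}\<^sup>*) \<and>
     card H + 2 = 2 * g + 2 * card V \<and>
     (\<forall>h\<in>H. w h \<in> I) \<and>
     (\<forall>h\<in>H. w (\<iota> h) = - w h) \<and>
     (\<forall>x\<in>V. (\<Sum>h\<in>{h\<in>H. vt h = x}. w h) = 0) \<and>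
     {(\<Sum>h\<in>H. of_int (k h) * w h) | k :: 'h \<Rightarrow> int. True} = I"

definition Q_linear_functional :: "complex set \<Rightarrow> (complex \<Rightarrow> rat) \<Rightarrow> bool" where
  "Q_linear_functional F \<phi> \<longleftrightarrow>
     (\<forall>x\<in>F. \<forall>y\<in>F. \<phi> (x + y) = \<phi> x + \<phi> y) \<and>
     (\<forall>q x. x \<in> F \<longrightarrow> \<phi> (of_rat q * x) = q * \<phi> x)"

text \<open>F \<otimes>_Q F realised canonically (F finite-dimensional) as Q-bilinear forms on
  F^* \<times> F^*: the pure tensor a \<otimes> b is (\<phi>, \<psi>) \<mapsto> \<phi> a * \<psi> b.\<close>
definition Q_tensor :: "complex set \<Rightarrow> complex \<Rightarrow> complex
     \<Rightarrow> ((complex \<Rightarrow> rat) \<times> (complex \<Rightarrow> rat)) \<Rightarrow> rat" where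
  "Q_tensor F a b = (\<lambda>(\<phi>, \<psi>).
     if Q_linear_functional F \<phi> \<and> Q_linear_functional F \<psi> then \<phi> a * \<psi> b else 0)"

definition Q_lin_indep :: "(nat \<Rightarrow> 'a \<Rightarrow> rat) \<Rightarrow> nat \<Rightarrow> bool" where
  "Q_lin_indep f n \<longleftrightarrow>
     (\<forall>c :: nat \<Rightarrow> rat. (\<lambda>p. \<Sum>i<n. c i * f i p) = (\<lambda>p. 0) \<longrightarrow> (\<forall>i<n. c i = 0))"

end

theory Submission
  imports Defs "HOL-Library.Function_Algebras" "HOL-Library.Indicator_Function"
    "HOL-Library.Transitive_Closure_Table"
begin

text \<open>
  The weights form a circulation \<open>w\<close> with values in \<open>F\<close> on the dual graph of the curve, and
  pairing rational 1-chains \<open>q\<close> with it, \<open>q \<mapsto> \<Sum>\<^sub>h q\<^sub>h w\<^sub>h\<close>, maps onto \<open>F\<close> because the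
  weights span the lattice \<open>I\<close> of rank \<open>g\<close>. The edge and vertex relations obeyed by every
  circulation are independent and number \<open>|H| - g\<close>, so by counting they span the kernel of this
  pairing. Hence every rational circulation is \<open>\<phi> \<circ> w\<close> for a \<open>\<rat>\<close>-linear \<open>\<phi> : F \<rightarrow> \<rat>\<close>.
  Evaluating a relation \<open>\<Sum>\<^sub>i c\<^sub>i r\<^sub>i \<otimes> r\<^sub>i = 0\<close> at \<open>\<phi> \<otimes> \<psi>\<close> then isolates \<open>c\<^sub>i\<close>
  once we have two rational circulations through a half-edge of weight \<open>r\<^sub>i\<close> whose supports
  meet only in half-edges of weight \<open>\<plusminus>r\<^sub>i\<close>. These come from Menger's theorem for two paths:
  a cut consisting of that half-edge and a single other edge would, by conservation of
  \<open>w\<close>, force the other edge to have weight \<open>\<plusminus>r\<^sub>i\<close> as well.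
\<close>

section \<open>Linear algebra over the rationals\<close>

lemma sum_apply: "(\<Sum>i\<in>A. f i) x = (\<Sum>i\<in>A. f i x)"
  by (induction A rule: infinite_finite_induct) auto

interpretation rat_fun: vector_space "\<lambda>(q::rat) (f::'a \<Rightarrow> rat) x. q * f x"
  by unfold_locales (simp_all add: fun_eq_iff algebra_simps)

interpretation rat_field: vector_space "\<lambda>(q::rat) (z::'a::field_char_0). of_rat q * z"
  by unfold_locales (simp_all add: algebra_simps of_rat_add of_rat_mult)

interpretation rat_fun_field: vector_space_pair "\<lambda>(q::rat) (f::'a \<Rightarrow> rat) x. q * f x"
  "\<lambda>(q::rat) (z::'b::field_char_0). of_rat q * z"
  by unfold_locales

lemma indicator_inj: "indicator A = (indicator B :: 'a \<Rightarrow> 'b::zero_neq_one) \<Longrightarrow> A = B"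
  by (metis indicator_eq_1_iff subsetI subset_antisym)

context vector_space
begin

lemma independent_if_spanning_card_le:
  assumes "finite S" and "independent B" and "B \<subseteq> span S" and "card S \<le> card B"
  shows "independent S"
proof -
  obtain S' where S': "S' \<subseteq> S" "independent S'" "S \<subseteq> span S'"
    by (meson empty_subsetI independent_empty maximal_independent_subset_extend)
  have "B \<subseteq> span S'"
    using assms(3) S'(3) span_mono[OF S'(3)] by (auto simp: span_span)
  then have "card B \<le> card S'"
    using independent_span_bound[OF finite_subset[OF S'(1) assms(1)] assms(2)] by simp
  then have "S' = S"
    using card_subset_eq[OF assms(1) S'(1)] card_mono[OF assms(1) S'(1)] assms(4) by linarith
  then show ?thesis
    using S'(2) by simp
qed

lemma span_subset_if_card_le:
  assumes "finite T" and "independent B" and "B \<subseteq> span T" and "card T \<le> card B"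
  shows "span T \<subseteq> span B"
proof -
  have "t \<in> span B" if "t \<in> T" for t
  proof (rule ccontr)
    assume t: "t \<notin> span B"
    then have "card (insert t B) \<le> card T"
      using independent_span_bound[OF assms(1) independent_insertI[OF t assms(2)]] assms(3)
        span_base[OF that] by auto
    moreover have "finite B" and "t \<notin> B"
      using independent_span_bound[OF assms(1,2,3)] t span_base by auto
    ultimately show False
      using assms(4) by simp
  qed
  then show ?thesis
    by (meson span_minimal subset_iff subspace_span)
qed

end

context vector_space_pair
begin

lemma kernel_subset_span_if_independent_image:
  assumes T: "Vector_Spaces.linear s1 s2 T" and K: "\<And>k. k \<in> K \<Longrightarrow> T k = 0"
    and C: "finite C" "vs2.independent (T ` C)" "inj_on T C"
    and x: "x \<in> vs1.span (K \<union> C)" "T x = 0"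
  shows "x \<in> vs1.span K"
proof -
  obtain k c where kc: "k \<in> vs1.span K" "c \<in> vs1.span C" "x = k + c"
    using x(1) vs1.span_Un by blast
  have "T k = 0"
    using kc(1) K linear_eq_0_on_span[OF T] by blast
  then have "T c = 0"
    using kc(3) x(2) linear_add[OF T] by simp
  then have "c = 0"
    using linear_indep_image_lemma[OF T C kc(2)] by blast
  then show ?thesis
    using kc by simp
qed

lemma kernel_subset_span_if_card_le:
  assumes T: "Vector_Spaces.linear s1 s2 T" and D: "W \<subseteq> vs1.span D" "finite D"
    and K: "K \<subseteq> W" "vs1.independent K" "\<And>k. k \<in> K \<Longrightarrow> T k = 0"
    and B: "B \<subseteq> T ` W" "vs2.independent B" and count: "card D \<le> card K + card B"
    and x: "x \<in> W" "T x = 0"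
  shows "x \<in> vs1.span K"
proof -
  obtain E where E: "K \<subseteq> E" "E \<subseteq> W" "vs1.independent E" "W \<subseteq> vs1.span E"
    using vs1.maximal_independent_subset_extend[OF K(1,2)] by blast
  have "finite E" and "card E \<le> card D"
    using vs1.independent_span_bound[OF D(2) E(3)] E(2) D(1) by auto
  define C where "C = E - K"
  have "finite C" and card_C: "card C \<le> card B"
    using \<open>finite E\<close> \<open>card E \<le> card D\<close> card_Diff_subset[OF finite_subset[OF E(1)] E(1)] count
    by (auto simp: C_def)
  have W: "W \<subseteq> vs1.span (K \<union> C)"
    using E(1,4) by (simp add: C_def Un_absorb1)
  have "B \<subseteq> vs2.span (T ` C)"
  proof
    fix b assume "b \<in> B"
    then obtain y where y: "y \<in> W" "b = T y"
      using B(1) by blast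
    then obtain k c where "k \<in> vs1.span K" "c \<in> vs1.span C" "y = k + c"
      using W vs1.span_Un by blast
    moreover have "T k = 0"
      using calculation(1) K(3) linear_eq_0_on_span[OF T] by blast
    ultimately show "b \<in> vs2.span (T ` C)"
      using y linear_add[OF T] linear_span_image[OF T] by auto
  qed
  then have "vs2.independent (T ` C)" and "card B \<le> card (T ` C)"
    using vs2.independent_if_spanning_card_le[of "T ` C"] card_image_le[OF \<open>finite C\<close>, of T]
      card_C \<open>finite C\<close> B(2) vs2.independent_span_bound[of "T ` C" B]
    by auto
  moreover have "inj_on T C"
    using calculation(2) card_C card_image_le[OF \<open>finite C\<close>, of T]
    by (intro eq_card_imp_inj_on \<open>finite C\<close>) simp
  ultimately show ?thesis
    using kernel_subset_span_if_independent_image[OF T K(3) \<open>finite C\<close>] W x by blast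
qed

end

lemma factor_through_kernel:
  fixes T :: "'a::ab_group_add \<Rightarrow> 'b::ab_group_add" and S :: "'a \<Rightarrow> 'c::ab_group_add"
  assumes W: "\<And>x y. x \<in> W \<Longrightarrow> y \<in> W \<Longrightarrow> x - y \<in> W"
    and T: "\<And>x y. T (x - y) = T x - T y" and S: "\<And>x y. S (x - y) = S x - S y"
    and kernel: "\<And>x. x \<in> W \<Longrightarrow> T x = 0 \<Longrightarrow> S x = 0"
  shows "\<exists>\<phi>. \<forall>x\<in>W. \<phi> (T x) = S x"
proof (intro exI ballI)
  fix x assume x: "x \<in> W"
  define x' where "x' = (SOME x'. x' \<in> W \<and> T x' = T x)"
  have "x' \<in> W \<and> T x' = T x"
    unfolding x'_def by (rule someI[of _ x]) (simp add: x)
  then have "S (x' - x) = 0"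
    using kernel[OF W[OF _ x]] T by simp
  then show "S (SOME x'. x' \<in> W \<and> T x' = T x) = S x"
    using S by (simp add: x'_def)
qed

section \<open>Flows on half-edge graphs\<close>

locale half_edge_graph =
  fixes H :: "'h set" and \<iota> :: "'h \<Rightarrow> 'h" and vt :: "'h \<Rightarrow> 'v"
  assumes finite_H: "finite H"
    and opp_in: "h \<in> H \<Longrightarrow> \<iota> h \<in> H"
    and opp_neq: "h \<in> H \<Longrightarrow> \<iota> h \<noteq> h"
    and opp_opp: "h \<in> H \<Longrightarrow> \<iota> (\<iota> h) = h"
begin

lemma opp_eq_opp_iff: "h \<in> H \<Longrightarrow> k \<in> H \<Longrightarrow> \<iota> h = \<iota> k \<longleftrightarrow> h = k"
  by (metis opp_opp)

definition outflow :: "('h \<Rightarrow> 'a::comm_monoid_add) \<Rightarrow> 'v \<Rightarrow> 'a" where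
  "outflow f x = (\<Sum>h\<in>{h\<in>H. vt h = x}. f h)"

definition is_flow :: "('v \<Rightarrow> 'a::ab_group_add) \<Rightarrow> ('h \<Rightarrow> 'a) \<Rightarrow> bool" where
  "is_flow d f \<longleftrightarrow> (\<forall>h\<in>H. f (\<iota> h) = - f h) \<and> (\<forall>x. outflow f x = d x)"

abbreviation circulation :: "('h \<Rightarrow> 'a::ab_group_add) \<Rightarrow> bool" where
  "circulation \<equiv> is_flow (\<lambda>_. 0)"

definition net_supply :: "'v \<Rightarrow> 'v \<Rightarrow> 'v \<Rightarrow> 'a::ring_1" where
  "net_supply u v x = of_bool (x = u) - of_bool (x = v)"

definition adjacent :: "'h set \<Rightarrow> 'v \<Rightarrow> 'v \<Rightarrow> bool" where
  "adjacent A x y \<longleftrightarrow> (\<exists>h\<in>A. vt h = x \<and> vt (\<iota> h) = y)"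

definition cut :: "'v set \<Rightarrow> 'h set" where
  "cut X = {h\<in>H. vt h \<in> X \<and> vt (\<iota> h) \<notin> X}"

definition edge_flow :: "'h \<Rightarrow> 'h \<Rightarrow> rat" where
  "edge_flow h k = of_bool (k = h) - of_bool (k = \<iota> h)"

definition unit_flow :: "'h set \<Rightarrow> 'v \<Rightarrow> 'v \<Rightarrow> ('h \<Rightarrow> rat) \<Rightarrow> bool" where
  "unit_flow A u v p \<longleftrightarrow> is_flow (net_supply u v) p \<and>
     (\<forall>h\<in>H. p h \<in> {-1, 0, 1}) \<and> (\<forall>h\<in>H. p h = 1 \<longrightarrow> h \<in> A)"

lemma is_flow_add:
  assumes "is_flow d f" and "is_flow e g"
  shows "is_flow (\<lambda>x. d x + e x) (\<lambda>h. f h + g h)"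
  using assms by (simp add: is_flow_def outflow_def sum.distrib)

lemma is_flow_diff:
  assumes "is_flow d f" and "is_flow e g"
  shows "is_flow (\<lambda>x. d x - e x) (\<lambda>h. f h - g h)"
  using assms by (simp add: is_flow_def outflow_def sum_subtractf)

lemma circulation_add:
  assumes "is_flow d f" and "is_flow e g" and "\<And>x. d x + e x = 0"
  shows "circulation (\<lambda>h. f h + g h)"
  using is_flow_add[OF assms(1,2)] assms(3) by simp

lemma is_flow_edge_flow:
  assumes "h \<in> H"
  shows "is_flow (net_supply (vt h) (vt (\<iota> h))) (edge_flow h)"
proof -
  have "edge_flow h (\<iota> k) = - edge_flow h k" if "k \<in> H" for k
    using that assms opp_opp opp_eq_opp_iff by (auto simp: edge_flow_def)
  moreover have "outflow (edge_flow h) x = net_supply (vt h) (vt (\<iota> h)) x" for x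
    using assms opp_in opp_neq finite_H
    by (simp add: outflow_def edge_flow_def net_supply_def of_bool_def sum_subtractf
        sum.If_cases Int_def conj_commute)
  ultimately show ?thesis by (simp add: is_flow_def)
qed

lemma flow_sum_cut:
  fixes f :: "'h \<Rightarrow> 'a::field_char_0"
  assumes "is_flow d f"
  shows "(\<Sum>h\<in>cut X. f h) = (\<Sum>x\<in>X \<inter> vt ` H. d x)"
proof -
  let ?S = "{h\<in>H. vt h \<in> X}" and ?I = "{h\<in>H. vt h \<in> X \<and> vt (\<iota> h) \<in> X}"
  have "(\<Sum>h\<in>?S. f h) = (\<Sum>x\<in>vt ` ?S. \<Sum>h\<in>{h\<in>?S. vt h = x}. f h)"
    by (rule sum.group[symmetric]) (use finite_H in auto)
  also have "\<dots> = (\<Sum>x\<in>vt ` ?S. outflow f x)"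
    by (rule sum.cong) (auto simp: outflow_def intro!: sum.cong)
  also have "vt ` ?S = X \<inter> vt ` H"
    by auto
  finally have S: "(\<Sum>h\<in>?S. f h) = (\<Sum>x\<in>X \<inter> vt ` H. d x)"
    using assms by (simp add: is_flow_def)
  have "(\<Sum>h\<in>?I. f h) = (\<Sum>h\<in>?I. f (\<iota> h))"
    by (rule sum.reindex_bij_witness[of _ \<iota> \<iota>]) (auto simp: opp_opp opp_in)
  also have "\<dots> = - (\<Sum>h\<in>?I. f h)"
    using assms by (simp add: is_flow_def sum_negf)
  finally have I: "(\<Sum>h\<in>?I. f h) = 0"
    by simp
  have "?S = ?I \<union> cut X"
    by (auto simp: cut_def)
  then have "(\<Sum>h\<in>?S. f h) = (\<Sum>h\<in>?I. f h) + (\<Sum>h\<in>cut X. f h)"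
    by (simp only:) (rule sum.union_disjoint, use finite_H in \<open>auto simp: cut_def\<close>)
  with S I show ?thesis
    by simp
qed

lemma not_in_cut_reachable:
  assumes "h \<in> cut {y. (adjacent A)\<^sup>*\<^sup>* u y}"
  shows "h \<notin> A"
  using assms rtranclp.rtrancl_into_rtrancl[of "adjacent A" u "vt h" "vt (\<iota> h)"]
  by (auto simp: cut_def adjacent_def)

lemma unit_flow_zero: "unit_flow A u u (\<lambda>_. 0)"
  by (simp add: unit_flow_def is_flow_def outflow_def net_supply_def)

lemma unit_flow_along_path:
  assumes "rtrancl_path (adjacent A) u xs v" and "distinct (u # xs)" and "A \<subseteq> H"
  shows "\<exists>p. unit_flow A u v p \<and> (\<forall>h\<in>H. p h \<noteq> 0 \<longrightarrow> vt h \<in> set (u # xs))"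
  using assms(1,2)
proof (induction rule: rtrancl_path.induct)
  case (base x)
  then show ?case
    using unit_flow_zero by blast
next
  case (step x y ys z)
  obtain p where p: "unit_flow A y z p" and supp: "\<forall>k\<in>H. p k \<noteq> 0 \<longrightarrow> vt k \<in> set (y # ys)"
    using step.IH step.prems by auto
  obtain h where h: "h \<in> A" "vt h = x" "vt (\<iota> h) = y"
    using step.hyps(1) by (auto simp: adjacent_def)
  have hH: "h \<in> H"
    using h(1) assms(3) by blast
  have x_fresh: "x \<notin> set (y # ys)"
    using step.prems by simp
  \<comment> \<open>the support invariant and distinctness of the path keep the new edge out of the support of \<open>p\<close>\<close>
  have p_h: "p h = 0" and p_opp: "p (\<iota> h) = 0"
    using supp hH h(2) x_fresh p by (auto simp: unit_flow_def is_flow_def)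
  define p' where "p' k = p k + edge_flow h k" for k
  have "is_flow (\<lambda>v. net_supply y z v + net_supply x y v) p'"
    unfolding p'_def using is_flow_add[OF _ is_flow_edge_flow[OF hH]] p h
    by (simp add: unit_flow_def)
  then have "is_flow (net_supply x z) p'"
    by (simp add: net_supply_def[abs_def])
  moreover have "p' k \<in> {-1, 0, 1}" and "p' k = 1 \<longrightarrow> k \<in> A" if "k \<in> H" for k
    using that p p_h p_opp h(1) opp_neq[OF hH]
    by (auto simp: p'_def edge_flow_def unit_flow_def)
  moreover have "\<forall>k\<in>H. p' k \<noteq> 0 \<longrightarrow> vt k \<in> set (x # y # ys)"
    using supp h by (auto simp: p'_def edge_flow_def)
  ultimately show ?case
    unfolding unit_flow_def by blast
qed

lemma unit_flow_exists:
  assumes "(adjacent A)\<^sup>*\<^sup>* u v" and "A \<subseteq> H"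
  obtains p where "unit_flow A u v p"
proof -
  obtain xs where "rtrancl_path (adjacent A) u xs v"
    using assms(1) by (auto simp: rtranclp_eq_rtrancl_path)
  then obtain xs' where "rtrancl_path (adjacent A) u xs' v" and "distinct (u # xs')"
    by (rule rtrancl_path_distinct)
  then show ?thesis
    using unit_flow_along_path assms(2) that by blast
qed

lemma unit_flow_vanishes:
  assumes "unit_flow A u v p" and "h \<in> H" and "h \<notin> A" and "\<iota> h \<notin> A"
  shows "p h = 0"
  using assms opp_in[OF assms(2)] by (force simp: unit_flow_def is_flow_def)

lemma sum_net_supply:
  "finite Y \<Longrightarrow> (\<Sum>x\<in>Y. net_supply u v x) = of_bool (u \<in> Y) - of_bool (v \<in> Y)"
  by (simp add: net_supply_def sum_subtractf of_bool_def sum.If_cases Int_def)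

lemma edge_flow_simps:
  assumes "h \<in> H"
  shows "edge_flow h h = 1" and "edge_flow h (\<iota> h) = -1"
    and "k \<noteq> h \<Longrightarrow> k \<noteq> \<iota> h \<Longrightarrow> edge_flow h k = 0"
  using opp_neq[OF assms] by (auto simp: edge_flow_def)

lemma reachable_by_positive_flow:
  fixes g :: "'h \<Rightarrow> rat"
  assumes g: "is_flow (\<lambda>x. a * net_supply u v x) g" and "a > 0"
  shows "(adjacent {h\<in>H. g h > 0})\<^sup>*\<^sup>* u v"
proof (rule ccontr)
  define X where "X = {y. (adjacent {h\<in>H. g h > 0})\<^sup>*\<^sup>* u y}"
  assume unreachable: "\<not> (adjacent {h\<in>H. g h > 0})\<^sup>*\<^sup>* u v"
  then have "u \<noteq> v"
    by auto
  then have "outflow g u \<noteq> 0"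
    using g \<open>a > 0\<close> by (simp add: is_flow_def net_supply_def)
  then have "u \<in> vt ` H"
    unfolding outflow_def by (metis (mono_tags, lifting) empty_Collect_eq image_eqI sum.empty)
  then have "(\<Sum>h\<in>cut X. g h) = a"
    using flow_sum_cut[OF g, of X] unreachable finite_H
    by (simp add: sum_distrib_left[symmetric] sum_net_supply X_def)
  moreover have "g h \<le> 0" if "h \<in> cut X" for h
    using not_in_cut_reachable[OF that[unfolded X_def]] that by (auto simp: cut_def)
  then have "(\<Sum>h\<in>cut X. g h) \<le> 0"
    by (rule sum_nonpos)
  ultimately show False
    using \<open>a > 0\<close> by simp
qed

lemma reachable_without_edge:
  fixes w :: "'h \<Rightarrow> 'a::field_char_0"
  assumes w: "circulation w" and h0: "h0 \<in> H" "w h0 \<noteq> 0"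
  shows "(adjacent (H - {h0, \<iota> h0}))\<^sup>*\<^sup>* (vt h0) (vt (\<iota> h0))"
proof (rule ccontr)
  define X where "X = {y. (adjacent (H - {h0, \<iota> h0}))\<^sup>*\<^sup>* (vt h0) y}"
  assume "\<not> (adjacent (H - {h0, \<iota> h0}))\<^sup>*\<^sup>* (vt h0) (vt (\<iota> h0))"
  then have "cut X = {h0}"
    using not_in_cut_reachable[of _ "H - {h0, \<iota> h0}"] h0(1) opp_opp[OF h0(1)]
    by (fastforce simp: X_def cut_def)
  then show False
    using flow_sum_cut[OF w, of X] h0(2) by simp
qed

text \<open>
  The set below is the residual network of the path \<open>p\<close>, with unlimited capacity on the
  weight class of \<open>h0\<close>. If it did not connect the ends of \<open>h0\<close>, the cut around \<open>vt h0\<close>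
  would consist of \<open>h0\<close> and of edges crossed forward by \<open>p\<close>; as \<open>p\<close> carries net flow 1 across
  it there is exactly one such edge, and conservation of \<open>w\<close> puts it into the weight class.
\<close>

lemma reachable_in_residual:
  fixes w :: "'h \<Rightarrow> 'a::field_char_0"
  assumes w: "circulation w" and h0: "h0 \<in> H"
    and p: "unit_flow (H - {h0, \<iota> h0}) (vt h0) (vt (\<iota> h0)) p"
  shows "(adjacent {h\<in>H - {h0, \<iota> h0}. w h = w h0 \<or> w h = - w h0 \<or> p h \<le> 0})\<^sup>*\<^sup>*
           (vt h0) (vt (\<iota> h0))"
proof (rule ccontr)
  let ?A = "{h\<in>H - {h0, \<iota> h0}. w h = w h0 \<or> w h = - w h0 \<or> p h \<le> 0}"
  define X where "X = {y. (adjacent ?A)\<^sup>*\<^sup>* (vt h0) y}"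
  assume unreachable: "\<not> (adjacent ?A)\<^sup>*\<^sup>* (vt h0) (vt (\<iota> h0))"
  have h0_cut: "h0 \<in> cut X"
    using h0 unreachable by (simp add: X_def cut_def)
  have other: "w h \<noteq> w h0 \<and> w h \<noteq> - w h0 \<and> p h = 1" if "h \<in> cut X - {h0}" for h
  proof -
    have "h \<noteq> \<iota> h0"
      using that unreachable opp_opp[OF h0] by (auto simp: X_def cut_def)
    moreover have "h \<notin> ?A"
      using that not_in_cut_reachable by (auto simp: X_def)
    ultimately show ?thesis
      using that p by (auto simp: cut_def unit_flow_def)
  qed
  have "p h0 = 0"
    using unit_flow_vanishes[OF p h0] opp_opp[OF h0] by simp
  then have "(\<Sum>h\<in>cut X. p h) = (\<Sum>h\<in>cut X - {h0}. 1)"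
    using sum.remove[OF _ h0_cut, of p] other finite_H by (simp add: cut_def)
  moreover have "(\<Sum>h\<in>cut X. p h) = 1"
    using flow_sum_cut[of "net_supply (vt h0) (vt (\<iota> h0))" p X] p h0 unreachable finite_H
    by (simp add: unit_flow_def sum_net_supply X_def)
  ultimately have "card (cut X - {h0}) = 1"
    by simp
  then obtain h1 where h1: "cut X - {h0} = {h1}"
    by (auto simp: card_1_singleton_iff)
  then have "cut X = {h0, h1}" and "h1 \<noteq> h0"
    using h0_cut by auto
  then have "(\<Sum>h\<in>cut X. w h) = w h0 + w h1"
    by simp
  moreover have "(\<Sum>h\<in>cut X. w h) = 0"
    using flow_sum_cut[OF w, of X] by simp
  ultimately show False
    using other h1 by (auto simp: add_eq_0_iff2)
qed

lemma unit_flowD: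
  assumes "unit_flow A u v p" and "h \<in> H"
  shows "p (\<iota> h) = - p h" and "p h = -1 \<or> p h = 0 \<or> p h = 1" and "p h = 1 \<Longrightarrow> h \<in> A"
  using assms by (auto simp: unit_flow_def is_flow_def)

lemma is_flow_add_unit_flows:
  assumes "unit_flow A u v p" and "unit_flow B u v q"
  shows "is_flow (\<lambda>x. 2 * net_supply u v x) (\<lambda>h. p h + q h)"
proof -
  have "is_flow (\<lambda>x. net_supply u v x + net_supply u v x) (\<lambda>h. p h + q h)"
    using is_flow_add assms unfolding unit_flow_def by blast
  moreover have "(\<lambda>x. net_supply u v x + net_supply u v x) = (\<lambda>x. 2 * net_supply u v x)"
    by (simp only: mult_2)
  ultimately show ?thesis
    by simp
qed

lemma unit_flow_add_residual:
  assumes p: "unit_flow A u v p" and q: "unit_flow {h\<in>A. h \<in> S \<or> p h \<le> 0} u v q"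
    and h: "h \<in> H" "h \<notin> S" "\<iota> h \<notin> S"
  shows "p h + q h = -1 \<or> p h + q h = 0 \<or> p h + q h = 1"
proof -
  have "\<not> (p h = 1 \<and> q h = 1)"
    using unit_flowD(3)[OF q h(1)] h(2) by auto
  moreover have "\<not> (p h = -1 \<and> q h = -1)"
    using unit_flowD(1)[OF p h(1)] unit_flowD(1)[OF q h(1)] unit_flowD(3)[OF q opp_in[OF h(1)]] h(3)
    by auto
  ultimately show ?thesis
    using unit_flowD(2)[OF p h(1)] unit_flowD(2)[OF q h(1)] by auto
qed

text \<open>
  \<open>g = p + q\<close> is a flow of value 2 taking values \<open>0, \<plusminus>1\<close> off the weight class of \<open>h0\<close>; a path
  \<open>f\<close> inside its positive part splits it into \<open>f\<close> and \<open>g - f\<close>, which share only half-edges of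
  that class. Closing both with the reversed half-edge (the flow \<open>c\<close>) gives the circulations.
\<close>

lemma circulations_meeting_in_weight_class:
  fixes w :: "'h \<Rightarrow> 'a::field_char_0"
  assumes w: "circulation w" and h0: "h0 \<in> H" "w h0 \<noteq> 0"
  obtains f1 f2 :: "'h \<Rightarrow> rat"
  where "circulation f1" and "circulation f2" and "f1 h0 \<noteq> 0" and "f2 h0 \<noteq> 0"
    and "\<And>h. h \<in> H \<Longrightarrow> f1 h * f2 h \<noteq> 0 \<Longrightarrow> w h = w h0 \<or> w h = - w h0"
proof -
  let ?u = "vt h0" and ?v = "vt (\<iota> h0)" and ?H' = "H - {h0, \<iota> h0}"
  have w_opp: "w (\<iota> h) = - w h" if "h \<in> H" for h
    using w that by (simp add: is_flow_def)
  define c where "c = edge_flow (\<iota> h0)"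
  have c: "is_flow (net_supply ?v ?u) c"
    using is_flow_edge_flow[OF opp_in[OF h0(1)]] opp_opp[OF h0(1)] by (simp add: c_def)
  have c_h0: "c h0 = -1" and c_other: "\<And>h. h \<noteq> h0 \<Longrightarrow> h \<noteq> \<iota> h0 \<Longrightarrow> c h = 0"
    using edge_flow_simps[OF opp_in[OF h0(1)]] opp_opp[OF h0(1)] by (auto simp: c_def)
  obtain p where p: "unit_flow ?H' ?u ?v p"
    using unit_flow_exists[OF reachable_without_edge[OF w h0]] by blast
  obtain q where q: "unit_flow {h\<in>?H'. w h = w h0 \<or> w h = - w h0 \<or> p h \<le> 0} ?u ?v q"
    using unit_flow_exists[OF reachable_in_residual[OF w h0(1) p]] by blast
  define g where "g h = p h + q h" for h
  have g: "is_flow (\<lambda>x. 2 * net_supply ?u ?v x) g"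
    unfolding g_def by (rule is_flow_add_unit_flows[OF p q])
  have g_h0: "g h0 = 0" and g_opp: "\<And>h. h \<in> H \<Longrightarrow> g (\<iota> h) = - g h"
    using unit_flow_vanishes[OF p h0(1)] unit_flow_vanishes[OF q h0(1)] opp_opp[OF h0(1)]
      unit_flowD(1)[OF p] unit_flowD(1)[OF q] by (auto simp: g_def)
  have g_unit: "g h = -1 \<or> g h = 0 \<or> g h = 1"
    if "h \<in> H" and "w h \<noteq> w h0" and "w h \<noteq> - w h0" for h
    using unit_flow_add_residual[of _ _ _ p "{h. w h = w h0 \<or> w h = - w h0}" q h] p q that
      w_opp[OF that(1)] by (simp add: g_def minus_equation_iff conj_disj_distribL)
  obtain f where f: "unit_flow {h\<in>H. g h > 0} ?u ?v f"
    using unit_flow_exists[OF reachable_by_positive_flow[OF g]] by auto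
  have f_h0: "f h0 = 0"
    using unit_flow_vanishes[OF f h0(1)] g_h0 g_opp[OF h0(1)] by simp
  have f_eq_g: "f h = g h" if "h \<in> H" "w h \<noteq> w h0" "w h \<noteq> - w h0" "f h \<noteq> 0" for h
    using unit_flowD[OF f that(1)] unit_flowD(3)[OF f opp_in[OF that(1)]] g_opp[OF that(1)]
      g_unit[OF that(1-3)] that(4) by force
  show ?thesis
  proof (rule that[of "\<lambda>h. f h + c h" "\<lambda>h. g h - f h + c h"])
    have f_flow: "is_flow (net_supply ?u ?v) f"
      using f by (simp add: unit_flow_def)
    show "circulation (\<lambda>h. f h + c h)"
      by (rule circulation_add[OF f_flow c]) (simp add: net_supply_def)
    show "circulation (\<lambda>h. g h - f h + c h)"
      by (rule circulation_add[OF is_flow_diff[OF g f_flow] c]) (simp add: net_supply_def)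
    show "f h0 + c h0 \<noteq> 0" and "g h0 - f h0 + c h0 \<noteq> 0"
      using f_h0 g_h0 c_h0 by simp_all
  next
    fix h
    assume "h \<in> H" and "(f h + c h) * (g h - f h + c h) \<noteq> 0"
    moreover have "w (\<iota> h0) = - w h0"
      using w_opp[OF h0(1)] .
    ultimately show "w h = w h0 \<or> w h = - w h0"
      using f_eq_g c_other by force
  qed
qed

end

section \<open>Rational chains and the weight pairing\<close>

context half_edge_graph
begin

definition chains :: "('h \<Rightarrow> rat) set" where
  "chains = {q. \<forall>h. h \<notin> H \<longrightarrow> q h = 0}"

definition chain_pairing :: "('h \<Rightarrow> 'a::field_char_0) \<Rightarrow> ('h \<Rightarrow> rat) \<Rightarrow> 'a" where
  "chain_pairing w q = (\<Sum>h\<in>H. of_rat (q h) * w h)"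

lemma linear_chain_pairing:
  "Vector_Spaces.linear (\<lambda>(q::rat) (f::'h \<Rightarrow> rat) x. q * f x) (\<lambda>q z. of_rat q * z) (chain_pairing w)"
  unfolding Vector_Spaces.linear_iff
  by (simp add: rat_fun.vector_space_axioms rat_field.vector_space_axioms chain_pairing_def
      of_rat_add of_rat_mult algebra_simps sum.distrib sum_distrib_left)

lemma chain_pairing_indicator:
  assumes "S \<subseteq> H"
  shows "chain_pairing w (indicator S) = (\<Sum>h\<in>S. w h)"
proof -
  have "chain_pairing w (indicator S) = (\<Sum>h\<in>H. if h \<in> S then w h else 0)"
    by (auto simp: chain_pairing_def indicator_def of_bool_def intro!: sum.cong)
  also have "\<dots> = (\<Sum>h\<in>S. w h)"
    using assms finite_H by (simp add: sum.inter_restrict[symmetric] Int_absorb1)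
  finally show ?thesis .
qed

lemma subspace_chains: "rat_fun.subspace chains"
  by (simp add: rat_fun.subspace_def chains_def)

lemma chains_subset_span: "chains \<subseteq> rat_fun.span ((\<lambda>h. indicator {h}) ` H)"
proof
  fix q assume "q \<in> chains"
  then have "q = (\<Sum>h\<in>H. (\<lambda>x. q h * indicator {h} x))"
    using finite_H by (auto simp: fun_eq_iff chains_def indicator_def sum_apply Int_insert_right)
  also have "\<dots> \<in> rat_fun.span ((\<lambda>h. indicator {h}) ` H)"
    by (intro rat_fun.span_sum rat_fun.span_scale rat_fun.span_base) auto
  finally show "q \<in> rat_fun.span ((\<lambda>h. indicator {h}) ` H)" .
qed

definition edges :: "'h set set" where
  "edges = (\<lambda>h. {h, \<iota> h}) ` H"

lemma mem_edge_iff: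
  assumes "h \<in> H" and "k \<in> H"
  shows "h \<in> {k, \<iota> k} \<longleftrightarrow> {k, \<iota> k} = {h, \<iota> h}"
  using assms opp_opp by auto

lemma card_edges: "2 * card edges = card H"
proof -
  have "2 * card edges = card (\<Union> edges)"
  proof (rule card_partition)
    show "finite edges" and "finite (\<Union> edges)"
      using finite_H opp_in by (auto simp: edges_def)
    show "card e = 2" if "e \<in> edges" for e
      using that opp_neq by (force simp: edges_def card_2_iff)
    show "e \<inter> e' = {}" if "e \<in> edges" "e' \<in> edges" "e \<noteq> e'" for e e'
      using that by (auto simp: edges_def opp_eq_opp_iff opp_opp)
  qed
  also have "\<Union> edges = H"
    using opp_in by (auto simp: edges_def)
  finally show ?thesis .
qed

end

locale stable_graph = half_edge_graph H \<iota> vt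
  for H :: "'h set" and \<iota> and vt :: "'h \<Rightarrow> 'v" +
  fixes V :: "'v set"
  assumes finite_V: "finite V"
    and vt_in_V: "h \<in> H \<Longrightarrow> vt h \<in> V"
    and connected: "x \<in> V \<Longrightarrow> y \<in> V \<Longrightarrow> (adjacent H)\<^sup>*\<^sup>* x y"
    and stable: "x \<in> V \<Longrightarrow> card {h\<in>H. vt h = x} \<ge> 3"
begin

definition star :: "'v \<Rightarrow> 'h set" where
  "star x = {h\<in>H. vt h = x}"

text \<open>All stars together have the same sum as all edges, so one star is left out.\<close>

definition relations :: "'v \<Rightarrow> ('h \<Rightarrow> rat) set" where
  "relations v0 = indicator ` (edges \<union> star ` (V - {v0}))"

lemma star_notin_edges:
  assumes "x \<in> V"
  shows "star x \<notin> edges"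
proof
  assume "star x \<in> edges"
  then obtain h where "star x = {h, \<iota> h}"
    by (auto simp: edges_def)
  moreover have "card {h, \<iota> h} \<le> 2"
    by (simp add: card_insert_if)
  ultimately show False
    using stable[OF assms] by (simp add: star_def)
qed

lemma inj_on_star: "inj_on star V"
proof (rule inj_onI)
  fix x y assume "x \<in> V" "y \<in> V" "star x = star y"
  moreover have "card (star x) \<ge> 3"
    using stable[OF \<open>x \<in> V\<close>] by (simp add: star_def)
  then have "star x \<noteq> {}"
    by auto
  then obtain h where "h \<in> star x"
    by blast
  ultimately show "x = y"
    by (auto simp: star_def)
qed

lemma card_relations:
  assumes "v0 \<in> V"
  shows "2 * card (relations v0) + 2 = card H + 2 * card V"
proof -
  have "finite edges"
    using finite_H by (simp add: edges_def)
  have "card (relations v0) = card (edges \<union> star ` (V - {v0}))"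
    unfolding relations_def by (rule card_image) (meson inj_onI indicator_inj)
  also have "\<dots> = card edges + card (star ` (V - {v0}))"
    using \<open>finite edges\<close> finite_V star_notin_edges by (intro card_Un_disjoint) auto
  also have "card (star ` (V - {v0})) = card V - 1"
    using card_image[OF inj_on_subset[OF inj_on_star, of "V - {v0}"]] assms finite_V by auto
  finally show ?thesis
    using card_edges assms finite_V card_gt_0_iff[of V] by auto
qed

lemma sum_relations_at:
  assumes h: "h \<in> H"
  shows "(\<Sum>k\<in>relations v0. c k * k h) =
    c (indicator {h, \<iota> h}) + (if vt h = v0 then 0 else c (indicator (star (vt h))))"
proof -
  let ?R = "edges \<union> star ` (V - {v0})"
  have "finite ?R"
    using finite_H finite_V by (simp add: edges_def)
  have "inj_on (indicator :: 'h set \<Rightarrow> 'h \<Rightarrow> rat) ?R"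
    by (meson inj_onI indicator_inj)
  then have "(\<Sum>k\<in>relations v0. c k * k h) = (\<Sum>s\<in>?R. c (indicator s) * indicator s h)"
    unfolding relations_def by (rule sum.reindex_cong) auto
  also have "\<dots> = (\<Sum>s\<in>?R. if h \<in> s then c (indicator s) else 0)"
    by (rule sum.cong) (auto simp: indicator_def)
  also have "\<dots> = (\<Sum>s\<in>{s\<in>?R. h \<in> s}. c (indicator s))"
    by (rule sum.inter_filter[symmetric, OF \<open>finite ?R\<close>])
  also have "{s\<in>?R. h \<in> s} = insert {h, \<iota> h} (star ` ({vt h} - {v0}))"
    using h mem_edge_iff vt_in_V by (auto simp: edges_def star_def)
  moreover have "star (vt h) \<noteq> {h, \<iota> h}"
    using star_notin_edges[OF vt_in_V[OF h]] h by (auto simp: edges_def)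
  ultimately show ?thesis
    by simp
qed

lemma constant_if_constant_on_edges:
  assumes "\<And>x y. adjacent H x y \<Longrightarrow> b x = b y" and "x \<in> V" and "y \<in> V"
  shows "b y = b x"
  using connected[OF assms(2,3)] assms(1) by (induction rule: rtranclp_induct) auto

lemma independent_relations:
  assumes "v0 \<in> V"
  shows "rat_fun.independent (relations v0)"
proof (rule rat_fun.independent_if_scalars_zero)
  show "finite (relations v0)"
    using finite_H finite_V by (simp add: relations_def edges_def)
  fix c :: "('h \<Rightarrow> rat) \<Rightarrow> rat" and k
  assume sum0: "(\<Sum>k\<in>relations v0. (\<lambda>x. c k * k x)) = 0" and k: "k \<in> relations v0"
  define b where "b x = (if x = v0 then 0 else c (indicator (star x)))" for x
  have eq: "c (indicator {h, \<iota> h}) + b (vt h) = 0" if "h \<in> H" for h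
    using fun_cong[OF sum0, of h] sum_relations_at[OF that, of c v0] by (simp add: sum_apply b_def)
  have "b x = b y" if adj: "adjacent H x y" for x y
  proof -
    obtain h where h: "h \<in> H" "vt h = x" "vt (\<iota> h) = y"
      using adj by (auto simp: adjacent_def)
    have "{\<iota> h, \<iota> (\<iota> h)} = {h, \<iota> h}"
      using opp_opp[OF h(1)] by auto
    then show ?thesis
      using eq[OF h(1)] eq[OF opp_in[OF h(1)]] h by simp
  qed
  then have b_zero: "b y = 0" if "y \<in> V" for y
    using constant_if_constant_on_edges[of b, OF _ assms that] by (simp add: b_def[of v0])
  obtain s where s: "s \<in> edges \<union> star ` (V - {v0})" "k = indicator s"
    using k by (auto simp: relations_def)
  then show "c k = 0"
  proof (cases "s \<in> edges")
    case True
    then obtain h where "h \<in> H" "s = {h, \<iota> h}"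
      by (auto simp: edges_def)
    then show ?thesis
      using eq b_zero vt_in_V s(2) by force
  next
    case False
    then obtain x where "x \<in> V - {v0}" "s = star x"
      using s(1) by blast
    then show ?thesis
      using b_zero[of x] s(2) by (simp add: b_def)
  qed
qed

lemma relations_subset_chains: "relations v0 \<subseteq> chains"
  using opp_in by (auto simp: relations_def chains_def edges_def star_def indicator_def)

lemma chain_pairing_relations:
  fixes w :: "'h \<Rightarrow> 'a::field_char_0"
  assumes w: "circulation w" and k: "k \<in> relations v0"
  shows "chain_pairing w k = 0"
proof -
  consider h where "h \<in> H" "k = indicator {h, \<iota> h}" | x where "k = indicator (star x)"
    using k by (auto simp: relations_def edges_def)
  then show ?thesis
  proof cases
    case 1
    then show ?thesis
      using w opp_in[OF 1(1)] opp_neq[OF 1(1)] not_sym[OF opp_neq[OF 1(1)]]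
      by (simp add: chain_pairing_indicator is_flow_def)
  next
    case 2
    then show ?thesis
      using w by (simp add: chain_pairing_indicator star_def is_flow_def outflow_def)
  qed
qed

text \<open>
  The relations lie in the kernel of the pairing with \<open>w\<close>, are independent and number
  \<open>|H| - g\<close>, while the image of the pairing contains \<open>g\<close> independent elements: so they span
  the kernel, and every circulation pairs to zero with it.
\<close>

lemma chain_pairing_kernel:
  fixes w :: "'h \<Rightarrow> 'a::field_char_0" and f :: "'h \<Rightarrow> rat"
  assumes w: "circulation w" and f: "circulation f"
    and genus: "card H + 2 = 2 * g + 2 * card V"
    and B: "B \<subseteq> chain_pairing w ` chains" "rat_field.independent B" "card B = g"
    and q: "q \<in> chains" "chain_pairing w q = 0"
  shows "chain_pairing f q = 0"
proof (cases "H = {}")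
  case True
  then show ?thesis
    unfolding chain_pairing_def by simp
next
  case False
  then obtain v0 where v0: "v0 \<in> V"
    using vt_in_V by blast
  have "card ((\<lambda>h. indicator {h} :: 'h \<Rightarrow> rat) ` H) \<le> card (relations v0) + card B"
    using card_image_le[OF finite_H, of "\<lambda>h. indicator {h} :: 'h \<Rightarrow> rat"] card_relations[OF v0] genus B(3)
    by linarith
  then have "q \<in> rat_fun.span (relations v0)"
    using rat_fun_field.kernel_subset_span_if_card_le[OF linear_chain_pairing chains_subset_span _
        relations_subset_chains independent_relations[OF v0] chain_pairing_relations[OF w] B(1,2) _ q]
      finite_H by simp
  then show ?thesis
    using rat_fun_field.linear_eq_0_on_span[OF linear_chain_pairing] chain_pairing_relations[OF f]
    by blast
qed

lemma circulation_factors_through_weights: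
  fixes w :: "'h \<Rightarrow> complex" and f :: "'h \<Rightarrow> rat"
  assumes w: "circulation w" and f: "circulation f"
    and genus: "card H + 2 = 2 * g + 2 * card V"
    and B: "B \<subseteq> chain_pairing w ` chains" "rat_field.independent B" "card B = g"
    and F: "F \<subseteq> chain_pairing w ` chains"
  obtains \<phi> where "Q_linear_functional F \<phi>" and "\<And>h. h \<in> H \<Longrightarrow> \<phi> (w h) = f h"
proof -
  have "\<exists>\<phi>. \<forall>q\<in>chains. \<phi> (chain_pairing w q) = chain_pairing f q"
  proof (rule factor_through_kernel)
    show "q - q' \<in> chains" if "q \<in> chains" "q' \<in> chains" for q q'
      using that by (simp add: chains_def)
    show "chain_pairing w (q - q') = chain_pairing w q - chain_pairing w q'"
      and "chain_pairing f (q - q') = chain_pairing f q - chain_pairing f q'" for q q'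
      by (rule rat_fun_field.linear_diff[OF linear_chain_pairing])+
  qed (rule chain_pairing_kernel[OF w f genus B])
  then obtain \<phi> where \<phi>: "\<And>q. q \<in> chains \<Longrightarrow> \<phi> (chain_pairing w q) = chain_pairing f q"
    by blast
  have "Q_linear_functional F \<phi>"
    unfolding Q_linear_functional_def
  proof (intro conjI ballI allI impI)
    fix x y assume "x \<in> F" "y \<in> F"
    then obtain qx qy where "qx \<in> chains" "qy \<in> chains" "x = chain_pairing w qx" "y = chain_pairing w qy"
      using F by blast
    moreover have "qx + qy \<in> chains"
      using calculation by (simp add: chains_def)
    ultimately show "\<phi> (x + y) = \<phi> x + \<phi> y"
      using \<phi> rat_fun_field.linear_add[OF linear_chain_pairing[of w]]
        rat_fun_field.linear_add[OF linear_chain_pairing[of f]] by metis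
  next
    fix c x assume "x \<in> F"
    then obtain qx where "qx \<in> chains" "x = chain_pairing w qx"
      using F by blast
    moreover have "(\<lambda>h. c * qx h) \<in> chains"
      using calculation by (simp add: chains_def)
    ultimately have "\<phi> (of_rat c * x) = chain_pairing f (\<lambda>h. c * qx h)"
      using \<phi> rat_fun_field.linear_scale[OF linear_chain_pairing[of w]] by metis
    then show "\<phi> (of_rat c * x) = c * \<phi> x"
      using \<phi> \<open>qx \<in> chains\<close> \<open>x = chain_pairing w qx\<close>
        rat_fun_field.linear_scale[OF linear_chain_pairing[of f]] by simp
  qed
  moreover have "\<phi> (w h) = f h" if "h \<in> H" for h
  proof -
    have "indicator {h} \<in> chains"
      using that by (auto simp: chains_def indicator_def)
    then show ?thesis
      using \<phi>[of "indicator {h}"] that by (simp add: chain_pairing_indicator)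
  qed
  ultimately show ?thesis
    using that by blast
qed

lemma circulationI:
  assumes "\<And>h. h \<in> H \<Longrightarrow> w (\<iota> h) = - w h"
    and "\<And>x. x \<in> V \<Longrightarrow> (\<Sum>h\<in>{h\<in>H. vt h = x}. w h) = 0"
  shows "circulation w"
proof -
  have "outflow w x = 0" for x
  proof (cases "x \<in> V")
    case True
    then show ?thesis
      using assms(2) by (simp add: outflow_def)
  next
    case False
    then have empty: "{h\<in>H. vt h = x} = {}"
      using vt_in_V by auto
    show ?thesis
      by (simp only: outflow_def empty sum.empty)
  qed
  with assms(1) show ?thesis
    by (simp add: is_flow_def)
qed

lemma weights_separated:
  fixes w :: "'h \<Rightarrow> complex"
  assumes w: "circulation w" and genus: "card H + 2 = 2 * g + 2 * card V"
    and B: "B \<subseteq> chain_pairing w ` chains" "rat_field.independent B" "card B = g"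
    and F: "F \<subseteq> chain_pairing w ` chains"
    and r: "r \<in> w ` H" "r \<noteq> 0"
  obtains \<phi> \<psi> where "Q_linear_functional F \<phi>" and "Q_linear_functional F \<psi>"
    and "\<phi> r * \<psi> r \<noteq> 0"
    and "\<And>s. s \<in> w ` H \<Longrightarrow> s \<noteq> r \<Longrightarrow> s \<noteq> - r \<Longrightarrow> \<phi> s * \<psi> s = 0"
proof -
  obtain h0 where h0: "h0 \<in> H" "w h0 = r"
    using r(1) by blast
  obtain f1 f2 :: "'h \<Rightarrow> rat" where f: "circulation f1" "circulation f2" "f1 h0 \<noteq> 0" "f2 h0 \<noteq> 0"
    and meet: "\<And>h. h \<in> H \<Longrightarrow> f1 h * f2 h \<noteq> 0 \<Longrightarrow> w h = w h0 \<or> w h = - w h0"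
    using circulations_meeting_in_weight_class[OF w h0(1)] h0(2) r(2) by blast
  obtain \<phi> where \<phi>: "Q_linear_functional F \<phi>" "\<And>h. h \<in> H \<Longrightarrow> \<phi> (w h) = f1 h"
    using circulation_factors_through_weights[OF w f(1) genus B F] by blast
  obtain \<psi> where \<psi>: "Q_linear_functional F \<psi>" "\<And>h. h \<in> H \<Longrightarrow> \<psi> (w h) = f2 h"
    using circulation_factors_through_weights[OF w f(2) genus B F] by blast
  show ?thesis
  proof (rule that[OF \<phi>(1) \<psi>(1)])
    show "\<phi> r * \<psi> r \<noteq> 0"
      using \<phi>(2) \<psi>(2) f(3,4) h0 by auto
    show "\<phi> s * \<psi> s = 0" if s: "s \<in> w ` H" "s \<noteq> r" "s \<noteq> - r" for s
    proof -
      obtain h where h: "h \<in> H" "s = w h"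
        using s(1) by blast
      then have "f1 h * f2 h = 0"
        using meet[OF h(1)] s(2,3) h0(2) by blast
      then show ?thesis
        using \<phi>(2) \<psi>(2) h by simp
    qed
  qed
qed

end

section \<open>Number fields, lattices and the theorem\<close>

lemma Q_indep_independent:
  assumes "Q_indep b g"
  shows "rat_field.independent (b ` {..<g})" and "card (b ` {..<g}) = g"
proof -
  have "inj_on b {..<g}"
  proof (rule inj_onI, rule ccontr)
    fix i j assume ij: "i \<in> {..<g}" "j \<in> {..<g}" "b i = b j" "i \<noteq> j"
    define q where "q k = (of_bool (k = i) - of_bool (k = j) :: rat)" for k
    have "(\<Sum>k<g. of_rat (q k) * b k) = (\<Sum>k<g. (if k = i then b k else 0) - (if k = j then b k else 0))"
      by (rule sum.cong) (auto simp: q_def)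
    also have "\<dots> = b i - b j"
      using ij by (simp add: sum_subtractf)
    finally have "(\<Sum>k<g. of_rat (q k) * b k) = 0"
      using ij by simp
    then have "q i = 0"
      using assms ij unfolding Q_indep_def by blast
    with ij show False
      by (simp add: q_def)
  qed
  then show "card (b ` {..<g}) = g"
    by (simp add: card_image)
  show "rat_field.independent (b ` {..<g})"
  proof (rule rat_field.independent_if_scalars_zero)
    fix c :: "complex \<Rightarrow> rat" and x
    assume "(\<Sum>x\<in>b ` {..<g}. of_rat (c x) * x) = 0" and "x \<in> b ` {..<g}"
    then show "c x = 0"
      using assms \<open>inj_on b {..<g}\<close> unfolding Q_indep_def by (auto simp: sum.reindex)
  qed simp
qed

lemma Q_span_subset_span: "Q_span b g \<subseteq> rat_field.span (b ` {..<g})"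
proof
  fix x assume "x \<in> Q_span b g"
  then obtain q where "x = (\<Sum>i<g. of_rat (q i) * b i)"
    unfolding Q_span_def by blast
  then show "x \<in> rat_field.span (b ` {..<g})"
    by (auto intro!: rat_field.span_sum intro: rat_field.span_scale rat_field.span_base)
qed

lemma Z_span_basis:
  assumes "i < g"
  shows "b i \<in> Z_span b g"
proof -
  have "(\<Sum>k<g. of_int (of_bool (k = i)) * b k) = (\<Sum>k<g. if k = i then b k else 0)"
    by (rule sum.cong) auto
  also have "\<dots> = b i"
    using assms by simp
  finally show ?thesis
    unfolding Z_span_def by (metis (mono_tags) CollectI)
qed

lemma Q_lin_indep_tensor_squares:
  assumes "\<And>i. i < n \<Longrightarrow> \<exists>\<phi> \<psi>. Q_linear_functional F \<phi> \<and> Q_linear_functional F \<psi> \<and>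
      \<phi> (r i) * \<psi> (r i) \<noteq> 0 \<and> (\<forall>j<n. j \<noteq> i \<longrightarrow> \<phi> (r j) * \<psi> (r j) = 0)"
  shows "Q_lin_indep (\<lambda>i. Q_tensor F (r i) (r i)) n"
  unfolding Q_lin_indep_def
proof (intro allI impI)
  fix c :: "nat \<Rightarrow> rat" and i
  assume c: "(\<lambda>p. \<Sum>j<n. c j * Q_tensor F (r j) (r j) p) = (\<lambda>p. 0)" and "i < n"
  then obtain \<phi> \<psi> where \<phi>\<psi>: "Q_linear_functional F \<phi>" "Q_linear_functional F \<psi>"
    "\<phi> (r i) * \<psi> (r i) \<noteq> 0" "\<forall>j<n. j \<noteq> i \<longrightarrow> \<phi> (r j) * \<psi> (r j) = 0"
    using assms by blast
  have "0 = (\<Sum>j<n. c j * (\<phi> (r j) * \<psi> (r j)))"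
    using fun_cong[OF c, of "(\<phi>, \<psi>)"] \<phi>\<psi>(1,2) by (simp add: Q_tensor_def)
  also have "\<dots> = c i * (\<phi> (r i) * \<psi> (r i))"
    using \<phi>\<psi>(4) \<open>i < n\<close> by (subst sum.remove[of _ i]) (auto intro!: sum.neutral)
  finally show "c i = 0"
    using \<phi>\<psi>(3) by simp
qed

context half_edge_graph
begin

lemma integer_weight_sums_in_image:
  "(\<Sum>h\<in>H. of_int (k h) * w h) \<in> chain_pairing w ` chains"
proof
  show "(\<lambda>h. if h \<in> H then of_int (k h) else 0) \<in> chains"
    by (simp add: chains_def)
qed (simp add: chain_pairing_def)

lemma number_field_in_image:
  fixes w :: "'h \<Rightarrow> complex"
  assumes N: "number_field_of_degree F g" and L: "is_lattice F g I"
    and I: "I = {(\<Sum>h\<in>H. of_int (k h) * w h) | k :: 'h \<Rightarrow> int. True}"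
  obtains B where "B \<subseteq> chain_pairing w ` chains" and "rat_field.independent B" and "card B = g"
    and "F \<subseteq> chain_pairing w ` chains"
proof -
  obtain b where b: "\<forall>i<g. b i \<in> F" "Q_indep b g" "I = Z_span b g"
    using L unfolding is_lattice_def by blast
  obtain e where e: "Q_indep e g" "Q_span e g = F"
    using N unfolding number_field_of_degree_def by blast
  let ?B = "b ` {..<g}"
  have "I \<subseteq> chain_pairing w ` chains"
    unfolding I using integer_weight_sums_in_image by blast
  then have B: "?B \<subseteq> chain_pairing w ` chains"
    using Z_span_basis[of _ g b] b(3) by auto
  have B_indep: "rat_field.independent ?B" and card_B: "card ?B = g"
    using Q_indep_independent[OF b(2)] by simp_all
  have "F \<subseteq> rat_field.span (e ` {..<g})"
    using Q_span_subset_span e(2) by blast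
  also have "\<dots> \<subseteq> rat_field.span ?B"
  proof (rule rat_field.span_subset_if_card_le[OF _ B_indep])
    show "?B \<subseteq> rat_field.span (e ` {..<g})"
      using b(1) Q_span_subset_span[of e g] e(2) by auto
    show "card (e ` {..<g}) \<le> card ?B"
      using card_image_le[of "{..<g}" e] card_B by simp
  qed simp
  also have "\<dots> \<subseteq> chain_pairing w ` chains"
    using rat_field.span_minimal[OF B
        rat_fun_field.linear_subspace_image[OF linear_chain_pairing subspace_chains]] .
  finally show ?thesis
    using that B B_indep card_B by blast
qed

end

lemma weighted_stable_curve_graph:
  assumes "weighted_stable_curve g I V H \<iota> vt w"
  shows "stable_graph H \<iota> vt V" and "half_edge_graph.is_flow H \<iota> vt (\<lambda>_. 0) w"
    and "card H + 2 = 2 * g + 2 * card V"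
    and "I = {(\<Sum>h\<in>H. of_int (k h) * w h) | k :: 'h \<Rightarrow> int. True}"
proof -
  interpret half_edge_graph H \<iota> vt
    using assms by unfold_locales (auto simp: weighted_stable_curve_def)
  have "{(vt h, vt (\<iota> h)) | h. h \<in> H} = {(x, y). adjacent H x y}"
    by (auto simp: adjacent_def)
  then show "stable_graph H \<iota> vt V"
    using assms unfolding weighted_stable_curve_def
    by (intro stable_graph.intro half_edge_graph_axioms stable_graph_axioms.intro)
      (auto simp: rtranclp_rtrancl_eq)
  then interpret stable_graph H \<iota> vt V .
  show "circulation w"
    using assms by (intro circulationI) (auto simp: weighted_stable_curve_def)
  show "card H + 2 = 2 * g + 2 * card V"
    and "I = {(\<Sum>h\<in>H. of_int (k h) * w h) | k :: 'h \<Rightarrow> int. True}"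
    using assms by (auto simp: weighted_stable_curve_def)
qed

theorem theorem3p1:
  fixes F I :: "complex set" and g n :: nat
    and V :: "'v set" and H :: "'h set" and \<iota> :: "'h \<Rightarrow> 'h" and vt :: "'h \<Rightarrow> 'v"
    and w :: "'h \<Rightarrow> complex" and r :: "nat \<Rightarrow> complex"
  assumes "number_field_of_degree F g"
    and "totally_real F"
    and "is_lattice F g I"
    and "weighted_stable_curve g I V H \<iota> vt w"
    and "\<forall>i<n. r i \<in> w ` H \<and> r i \<noteq> 0"
    and "\<forall>i<n. \<forall>j<n. i \<noteq> j \<longrightarrow> r i \<noteq> r j \<and> r i \<noteq> - r j"
    and "\<forall>h\<in>H. w h \<noteq> 0 \<longrightarrow> (\<exists>i<n. w h = r i \<or> w h = - r i)"
  shows "Q_lin_indep (\<lambda>i. Q_tensor F (r i) (r i)) n"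
proof -
  interpret stable_graph H \<iota> vt V
    using weighted_stable_curve_graph(1)[OF assms(4)] .
  note w = weighted_stable_curve_graph(2)[OF assms(4)]
    and genus = weighted_stable_curve_graph(3)[OF assms(4)]
  obtain B where B: "B \<subseteq> chain_pairing w ` chains" "rat_field.independent B" "card B = g"
    and F: "F \<subseteq> chain_pairing w ` chains"
    using number_field_in_image[OF assms(1,3) weighted_stable_curve_graph(4)[OF assms(4)]] by blast
  show ?thesis
  proof (rule Q_lin_indep_tensor_squares)
    fix i assume "i < n"
    then obtain \<phi> \<psi> where "Q_linear_functional F \<phi>" "Q_linear_functional F \<psi>"
      and "\<phi> (r i) * \<psi> (r i) \<noteq> 0"
      and sep: "\<And>s. s \<in> w ` H \<Longrightarrow> s \<noteq> r i \<Longrightarrow> s \<noteq> - r i \<Longrightarrow> \<phi> s * \<psi> s = 0"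
      using weights_separated[OF w genus B F, of "r i"] assms(5) by blast
    moreover have "\<phi> (r j) * \<psi> (r j) = 0" if "j < n" "j \<noteq> i" for j
      using sep[of "r j"] assms(5,6) that \<open>i < n\<close> by blast
    ultimately show "\<exists>\<phi> \<psi>. Q_linear_functional F \<phi> \<and> Q_linear_functional F \<psi> \<and>
        \<phi> (r i) * \<psi> (r i) \<noteq> 0 \<and> (\<forall>j<n. j \<noteq> i \<longrightarrow> \<phi> (r j) * \<psi> (r j) = 0)"
      by blast
  qed
qed

end
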